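(* Let $A$ be a brick gentle algebra. For any $\widetilde{\mathfrak T}\in\mathrm{torshad}(\Pi(A))$, the set of strings $B(\widetilde{\mathfrak T})$ is a biclosed set.
   Context: Setting: $k$ a field, $A=kQ/I$, $Q$ finite connected quiver, $I$ admissible generated by paths (paths composed right to left). Gentle: (S1) each vertex has at most two incoming and two outgoing arrows; (S2) for each arrow $\alpha$ at most one $\beta$ with $\alpha\beta$ a path not in $I$ and at most one $\gamma$ with $\gamma\alpha$ a path not in $I$; (G1) $I$ generated by paths of length two; (G2) for each arrow $\alpha$ at most one $\beta$ with $\alpha\beta$ a path in $I$ and at most one $\gamma$ with $\gamma\alpha$ a path in $I$. Brick gentle: moreover every indecomposable module has endomorphism ring a division ring. Strings (for any $k\Gamma/J$, $J$ generated by paths): words $w=\gamma_d^{\epsilon_d}\cdots\gamma_1^{\epsilon_1}$ in arrows and formal inverses ($s(\gamma^{-1})=t(\gamma)$, $t(\gamma^{-1})=s(\gamma)$), consecutive letters composable, no $\gamma\gamma^{-1}$ or $\gamma^{-1}\gamma$, neither $w$ nor $w^{-1}$ containing a subword which is a path in $J$; plus length-zero strings; $w\sim w^{-1}$. String module $M(w)$: basis $b_1,\dots,b_{d+1}$, $b_j$ at vertex $x_j$ ($x_1=s(\gamma_1^{\epsilon_1})$, $x_{i+1}=t(\gamma_i^{\epsilon_i})$); $\gamma_i$ sends $b_i\mapsto b_{i+1}$ if $\epsilon_i=1$, $b_{i+1}\mapsto b_i$ if $\epsilon_i=-1$, other actions zero. A concatenation of $u,v\in\mathrm{Str}(A)$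 is a string $v\gamma^{\pm1}u$, $\gamma\in Q_1$; $X\subseteq\mathrm{Str}(A)$ is closed if it contains all concatenations of its elements, biclosed if $X$ and its complement are closed. For $w$ of length $d$, $w=w_1\gamma_j^{\epsilon_j}w_2$ ($1\le j\le d$) gives a break $\{w_1,w_2\}$ with splits $w_1,w_2$. Labels $\mathcal S$: pairs $w_{\mathcal D}=(w,\mathcal D)$, $\mathcal D$ a set of $d$ splits of $w$ no two in the same break, modulo $(w,\mathcal D)\sim(w^{-1},\mathcal D^{-1})$. $\Pi(A)=k\overline Q/\overline I$: $\overline Q$ adds $\gamma^*:t(\gamma)\to s(\gamma)$ for each $\gamma\in Q_1$; $\overline I$ generated by $\beta\alpha,\alpha^*\beta^*$ for paths $\beta\alpha\in I$ of length two. A string of $\Pi(A)$ specializes to the word obtained by replacing $\gamma^*$ by $\gamma^{-1}$ and $(\gamma^* )^{-1}$ by $\gamma$. $\mathcal M$ is the additive closure of all $M(\widetilde w)$ with $\widetilde w$ a string of $\Pi(A)$ specializing to a string of $A$. The map $\mathrm{str}$: for $w_{\mathcal D}$, $w=\gamma_d^{\epsilon_d}\cdots\gamma_1^{\epsilon_1}$, replace the $i$-th letter by $\gamma_i$ if $w=u\gamma_iw'$ with $w'\in\mathcal D$; $\gamma_i^*$ if $w=u\gamma_i^{-1}w'$ with $w'\in\mathcal D$; $\gamma_i^{-1}$ if $w=w'\gamma_i^{-1}u$ with $w'\in\mathcal D$; $(\gamma_i^* )^{-1}$ if $w=w'\gamma_iu$ with $w'\in\mathcal D$ ($u$ possibly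 empty); $\mathrm{str}$ is a bijection from $\mathcal S$ onto the strings of $\Pi(A)$ specializing to strings of $A$. $\mathrm{torshad}(\Pi(A))$ is the set of all $\mathcal T\cap\mathcal M$ with $\mathcal T$ a torsion class (closed under quotients and extensions) of $\mathrm{mod}(\Pi(A))$. For $\widetilde{\mathfrak T}\in\mathrm{torshad}(\Pi(A))$, $B(\widetilde{\mathfrak T}):=\{w\in\mathrm{Str}(A)\mid M(\mathrm{str}(w_{\mathcal D}))\in\widetilde{\mathfrak T}\text{ for some }\mathcal D\}$. *)

theory Defs
  imports Main
begin

text \<open>A pair (b, a) in qrels stands for the length-two path b a
  (paths composed right to left: a first, then b).  The ideal is the one
  generated by these paths.\<close>

record ('v, 'a) bq =
  verts :: "'v set"
  arrs  :: "'a set"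
  qsrc  :: "'a \<Rightarrow> 'v"
  qtgt  :: "'a \<Rightarrow> 'v"
  qrels :: "('a \<times> 'a) set"

text \<open>Paths as lists of arrows in order of application.\<close>
definition is_path :: "('v,'a) bq \<Rightarrow> 'a list \<Rightarrow> bool" where
  "is_path Q p \<longleftrightarrow> (\<forall>a\<in>set p. a \<in> arrs Q) \<and>
     (\<forall>i. Suc i < length p \<longrightarrow> qtgt Q (p ! i) = qsrc Q (p ! Suc i))"

definition connected_quiver :: "('v,'a) bq \<Rightarrow> bool" where
  "connected_quiver Q \<longleftrightarrow>
     (\<forall>v\<in>verts Q. \<forall>w\<in>verts Q. (v, w) \<in>
        ({(qsrc Q a, qtgt Q a) | a. a \<in> arrs Q} \<union> {(qtgt Q a, qsrc Q a) | a. a \<in> arrs Q})\<^sup>*)"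

text \<open>Gentle bound quiver: finite connected quiver, admissible ideal generated
  by the paths of length two in qrels (so (G1) is built in), and (S1), (S2), (G2).\<close>
definition gentle :: "('v,'a) bq \<Rightarrow> bool" where
  "gentle Q \<longleftrightarrow>
     finite (verts Q) \<and> finite (arrs Q) \<and>
     (\<forall>a\<in>arrs Q. qsrc Q a \<in> verts Q \<and> qtgt Q a \<in> verts Q) \<and>
     connected_quiver Q \<and>
     qrels Q \<subseteq> {(b, a). a \<in> arrs Q \<and> b \<in> arrs Q \<and> qtgt Q a = qsrc Q b} \<and>
     (\<exists>N. \<forall>p. is_path Q p \<and> length p \<ge> N \<longrightarrow>
            (\<exists>i. Suc i < length p \<and> (p ! Suc i, p ! i) \<in> qrels Q)) \<and>
     (\<forall>v\<in>verts Q. card {a\<in>arrs Q. qtgt Q a = v} \<le> 2 \<and> card {a\<in>arrs Q. qsrc Q a = v} \<le> 2) \<and>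
     (\<forall>a\<in>arrs Q.
        (\<forall>b\<in>arrs Q. \<forall>b'\<in>arrs Q.
           qtgt Q b = qsrc Q a \<and> (a, b) \<notin> qrels Q \<and>
           qtgt Q b' = qsrc Q a \<and> (a, b') \<notin> qrels Q \<longrightarrow> b = b') \<and>
        (\<forall>c\<in>arrs Q. \<forall>c'\<in>arrs Q.
           qtgt Q a = qsrc Q c \<and> (c, a) \<notin> qrels Q \<and>
           qtgt Q a = qsrc Q c' \<and> (c', a) \<notin> qrels Q \<longrightarrow> c = c') \<and>
        (\<forall>b\<in>arrs Q. \<forall>b'\<in>arrs Q.
           qtgt Q b = qsrc Q a \<and> (a, b) \<in> qrels Q \<and>
           qtgt Q b' = qsrc Q a \<and> (a, b') \<in> qrels Q \<longrightarrow> b = b') \<and>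
        (\<forall>c\<in>arrs Q. \<forall>c'\<in>arrs Q.
           qtgt Q a = qsrc Q c \<and> (c, a) \<in> qrels Q \<and>
           qtgt Q a = qsrc Q c' \<and> (c', a) \<in> qrels Q \<longrightarrow> c = c'))"

type_synonym 'k mat = "nat \<Rightarrow> nat \<Rightarrow> 'k"
type_synonym 'k vec = "nat \<Rightarrow> 'k"
text \<open>A representation: dimension at each vertex and a matrix for each arrow
  (rows indexed by the target space, columns by the source space).\<close>
type_synonym ('v, 'a, 'k) rep = "('v \<Rightarrow> nat) \<times> ('a \<Rightarrow> 'k mat)"

definition mmul :: "nat \<Rightarrow> 'k::field mat \<Rightarrow> 'k mat \<Rightarrow> 'k mat" where
  "mmul n A B = (\<lambda>i j. \<Sum>m<n. A i m * B m j)"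

definition mapp :: "nat \<Rightarrow> 'k::field mat \<Rightarrow> 'k vec \<Rightarrow> 'k vec" where
  "mapp n A x = (\<lambda>i. \<Sum>j<n. A i j * x j)"

definition is_rep :: "('v,'a) bq \<Rightarrow> ('v,'a,'k::field) rep \<Rightarrow> bool" where
  "is_rep Q M \<longleftrightarrow> (case M of (d, m) \<Rightarrow>
     (\<forall>v. v \<notin> verts Q \<longrightarrow> d v = 0) \<and>
     (\<forall>a. a \<notin> arrs Q \<longrightarrow> m a = (\<lambda>i j. 0)) \<and>
     (\<forall>a\<in>arrs Q. \<forall>i j. i \<ge> d (qtgt Q a) \<or> j \<ge> d (qsrc Q a) \<longrightarrow> m a i j = 0) \<and>
     (\<forall>(b, a)\<in>qrels Q. \<forall>i<d (qtgt Q b). \<forall>j<d (qsrc Q a).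
        mmul (d (qtgt Q a)) (m b) (m a) i j = 0))"

definition is_morph :: "('v,'a) bq \<Rightarrow> ('v,'a,'k::field) rep \<Rightarrow> ('v,'a,'k) rep \<Rightarrow> ('v \<Rightarrow> 'k mat) \<Rightarrow> bool" where
  "is_morph Q M N f \<longleftrightarrow> (case M of (dM, mM) \<Rightarrow> case N of (dN, mN) \<Rightarrow>
     (\<forall>a\<in>arrs Q. \<forall>i<dN (qtgt Q a). \<forall>j<dM (qsrc Q a).
        mmul (dN (qsrc Q a)) (mN a) (f (qsrc Q a)) i j = mmul (dM (qtgt Q a)) (f (qtgt Q a)) (mM a) i j))"

text \<open>Linear map k^n \<rightarrow> k^m given by matrix A.\<close>
definition lin_surj :: "nat \<Rightarrow> nat \<Rightarrow> 'k::field mat \<Rightarrow> bool" where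
  "lin_surj n m A \<longleftrightarrow> (\<forall>y. \<exists>x. \<forall>i<m. mapp n A x i = y i)"

definition lin_inj :: "nat \<Rightarrow> nat \<Rightarrow> 'k::field mat \<Rightarrow> bool" where
  "lin_inj n m A \<longleftrightarrow> (\<forall>x. (\<forall>i<m. mapp n A x i = 0) \<longrightarrow> (\<forall>j<n. x j = 0))"

definition surj_morph :: "('v,'a) bq \<Rightarrow> ('v,'a,'k::field) rep \<Rightarrow> ('v,'a,'k) rep \<Rightarrow> ('v \<Rightarrow> 'k mat) \<Rightarrow> bool" where
  "surj_morph Q M N f \<longleftrightarrow> is_morph Q M N f \<and>
     (\<forall>v\<in>verts Q. lin_surj (fst M v) (fst N v) (f v))"

definition iso_morph :: "('v,'a) bq \<Rightarrow> ('v,'a,'k::field) rep \<Rightarrow> ('v,'a,'k) rep \<Rightarrow> ('v \<Rightarrow> 'k mat) \<Rightarrow> bool" where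
  "iso_morph Q M N f \<longleftrightarrow> is_morph Q M N f \<and>
     (\<forall>v\<in>verts Q. lin_surj (fst M v) (fst N v) (f v) \<and> lin_inj (fst M v) (fst N v) (f v))"

definition isomorphic :: "('v,'a) bq \<Rightarrow> ('v,'a,'k::field) rep \<Rightarrow> ('v,'a,'k) rep \<Rightarrow> bool" where
  "isomorphic Q M N \<longleftrightarrow> (\<exists>f. iso_morph Q M N f)"

definition short_exact :: "('v,'a) bq \<Rightarrow> ('v,'a,'k::field) rep \<Rightarrow> ('v,'a,'k) rep \<Rightarrow> ('v,'a,'k) rep
     \<Rightarrow> ('v \<Rightarrow> 'k mat) \<Rightarrow> ('v \<Rightarrow> 'k mat) \<Rightarrow> bool" where
  "short_exact Q L M N f g \<longleftrightarrow> is_morph Q L M f \<and> surj_morph Q M N g \<and>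
     (\<forall>v\<in>verts Q. lin_inj (fst L v) (fst M v) (f v) \<and>
        (\<forall>y. (\<forall>i<fst N v. mapp (fst M v) (g v) y i = 0) \<longleftrightarrow>
             (\<exists>x. \<forall>i<fst M v. mapp (fst L v) (f v) x i = y i)))"

definition torsion_class :: "('v,'a) bq \<Rightarrow> ('v,'a,'k::field) rep set \<Rightarrow> bool" where
  "torsion_class Q T \<longleftrightarrow> T \<subseteq> {M. is_rep Q M} \<and>
     (\<forall>M\<in>T. \<forall>N f. is_rep Q N \<and> surj_morph Q M N f \<longrightarrow> N \<in> T) \<and>
     (\<forall>L\<in>T. \<forall>N\<in>T. \<forall>M f g. is_rep Q M \<and> short_exact Q L M N f g \<longrightarrow> M \<in> T)"

definition zero_rep :: "('v,'a,'k::field) rep" where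
  "zero_rep = (\<lambda>_. 0, \<lambda>_ _ _. 0)"

definition dsum :: "('v,'a) bq \<Rightarrow> ('v,'a,'k::field) rep \<Rightarrow> ('v,'a,'k) rep \<Rightarrow> ('v,'a,'k) rep" where
  "dsum Q M N = (case M of (dM, mM) \<Rightarrow> case N of (dN, mN) \<Rightarrow>
     (\<lambda>v. dM v + dN v,
      \<lambda>a i j. if i < dM (qtgt Q a) \<and> j < dM (qsrc Q a) then mM a i j
             else if dM (qtgt Q a) \<le> i \<and> dM (qsrc Q a) \<le> j
               then mN a (i - dM (qtgt Q a)) (j - dM (qsrc Q a)) else 0))"

definition nonzero_rep :: "('v,'a) bq \<Rightarrow> ('v,'a,'k::field) rep \<Rightarrow> bool" where
  "nonzero_rep Q M \<longleftrightarrow> (\<exists>v\<in>verts Q. fst M v > 0)"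

definition indecomposable :: "('v,'a) bq \<Rightarrow> ('v,'a,'k::field) rep \<Rightarrow> bool" where
  "indecomposable Q M \<longleftrightarrow> is_rep Q M \<and> nonzero_rep Q M \<and>
     \<not> (\<exists>M1 M2. is_rep Q M1 \<and> is_rep Q M2 \<and> nonzero_rep Q M1 \<and> nonzero_rep Q M2 \<and>
            isomorphic Q M (dsum Q M1 M2))"

text \<open>End(M) is a division ring: every nonzero endomorphism is invertible
  (End(M) is nonzero since M is nonzero).\<close>
definition End_division :: "('v,'a) bq \<Rightarrow> ('v,'a,'k::field) rep \<Rightarrow> bool" where
  "End_division Q M \<longleftrightarrow> (\<forall>f. is_morph Q M M f \<and>
      (\<exists>v\<in>verts Q. \<exists>i<fst M v. \<exists>j<fst M v. f v i j \<noteq> 0) \<longrightarrow> iso_morph Q M M f)"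

definition brick_gentle :: "('v,'a) bq \<Rightarrow> 'k::field itself \<Rightarrow> bool" where
  "brick_gentle Q _ \<longleftrightarrow> gentle Q \<and>
     (\<forall>M :: ('v,'a,'k) rep. indecomposable Q M \<longrightarrow> End_division Q M)"

text \<open>A letter (a, True) is the arrow a, (a, False) its formal inverse.  A string
  is (x, ls): start vertex x and the letters in order of application
  (ls ! 0 = gamma_1^eps_1, the rightmost letter of the word).\<close>

definition lsrc :: "('v,'a) bq \<Rightarrow> 'a \<times> bool \<Rightarrow> 'v" where
  "lsrc Q l = (if snd l then qsrc Q (fst l) else qtgt Q (fst l))"
definition ltgt :: "('v,'a) bq \<Rightarrow> 'a \<times> bool \<Rightarrow> 'v" where
  "ltgt Q l = (if snd l then qtgt Q (fst l) else qsrc Q (fst l))"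

definition is_string :: "('v,'a) bq \<Rightarrow> 'v \<times> ('a \<times> bool) list \<Rightarrow> bool" where
  "is_string Q w \<longleftrightarrow> (case w of (x, ls) \<Rightarrow>
     x \<in> verts Q \<and> (\<forall>l\<in>set ls. fst l \<in> arrs Q) \<and>
     (ls \<noteq> [] \<longrightarrow> lsrc Q (hd ls) = x) \<and>
     (\<forall>i. Suc i < length ls \<longrightarrow>
        ltgt Q (ls ! i) = lsrc Q (ls ! Suc i) \<and>
        \<not> (fst (ls ! i) = fst (ls ! Suc i) \<and> snd (ls ! i) \<noteq> snd (ls ! Suc i)) \<and>
        (snd (ls ! i) \<and> snd (ls ! Suc i) \<longrightarrow> (fst (ls ! Suc i), fst (ls ! i)) \<notin> qrels Q) \<and>
        (\<not> snd (ls ! i) \<and> \<not> snd (ls ! Suc i) \<longrightarrow> (fst (ls ! i), fst (ls ! Suc i)) \<notin> qrels Q)))"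

definition Str :: "('v,'a) bq \<Rightarrow> ('v \<times> ('a \<times> bool) list) set" where
  "Str Q = {w. is_string Q w}"

definition endv :: "('v,'a) bq \<Rightarrow> 'v \<times> ('a \<times> bool) list \<Rightarrow> 'v" where
  "endv Q w = (if snd w = [] then fst w else ltgt Q (last (snd w)))"

definition inv_str :: "('v,'a) bq \<Rightarrow> 'v \<times> ('a \<times> bool) list \<Rightarrow> 'v \<times> ('a \<times> bool) list" where
  "inv_str Q w = (endv Q w, rev (map (\<lambda>(a, b). (a, \<not> b)) (snd w)))"

text \<open>Concatenations v gamma^{\<plusminus>1} u of u and v (u applied first).\<close>
definition concatenations :: "('v,'a) bq \<Rightarrow> 'v \<times> ('a \<times> bool) list \<Rightarrow> 'v \<times> ('a \<times> bool) list
     \<Rightarrow> ('v \<times> ('a \<times> bool) list) set" where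
  "concatenations Q u v = {(fst u, snd u @ [l] @ snd v) | l.
      fst l \<in> arrs Q \<and> lsrc Q l = endv Q u \<and> ltgt Q l = fst v} \<inter> Str Q"

text \<open>Sets of strings are represented by sets of representatives; the sets
  considered are closed under string inversion, so this is the same as working
  with strings modulo w \<sim> w^{-1}.\<close>
definition closed_set :: "('v,'a) bq \<Rightarrow> ('v \<times> ('a \<times> bool) list) set \<Rightarrow> bool" where
  "closed_set Q X \<longleftrightarrow> (\<forall>u\<in>X. \<forall>v\<in>X. concatenations Q u v \<subseteq> X)"

definition biclosed :: "('v,'a) bq \<Rightarrow> ('v \<times> ('a \<times> bool) list) set \<Rightarrow> bool" where
  "biclosed Q X \<longleftrightarrow> X \<subseteq> Str Q \<and> closed_set Q X \<and> closed_set Q (Str Q - X)"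

definition svert :: "('v,'a) bq \<Rightarrow> 'v \<times> ('a \<times> bool) list \<Rightarrow> nat \<Rightarrow> 'v" where
  "svert Q w j = (if j = 0 then fst w else ltgt Q (snd w ! (j - 1)))"

text \<open>Local index of basis vector b_j inside the space at its vertex.\<close>
definition sidx :: "('v,'a) bq \<Rightarrow> 'v \<times> ('a \<times> bool) list \<Rightarrow> nat \<Rightarrow> nat" where
  "sidx Q w j = card {j'. j' < j \<and> svert Q w j' = svert Q w j}"

definition strmod :: "('v,'a) bq \<Rightarrow> 'v \<times> ('a \<times> bool) list \<Rightarrow> ('v,'a,'k::field) rep" where
  "strmod Q w =
     (\<lambda>v. card {j. j \<le> length (snd w) \<and> svert Q w j = v},
      \<lambda>a r c. if (\<exists>i<length (snd w).
                   (snd w ! i = (a, True) \<and> c = sidx Q w i \<and> r = sidx Q w (Suc i)) \<or>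
                   (snd w ! i = (a, False) \<and> c = sidx Q w (Suc i) \<and> r = sidx Q w i))
               then 1 else 0)"

text \<open>Inl g is the arrow g, Inr g is g^*: t(g) \<rightarrow> s(g).  Relations: b a and a^* b^*
  for each relation b a of A.\<close>
definition preproj :: "('v,'a) bq \<Rightarrow> ('v, 'a + 'a) bq" where
  "preproj Q = \<lparr> verts = verts Q, arrs = Inl ` arrs Q \<union> Inr ` arrs Q,
     qsrc = case_sum (qsrc Q) (qtgt Q), qtgt = case_sum (qtgt Q) (qsrc Q),
     qrels = {(Inl b, Inl a) | b a. (b, a) \<in> qrels Q} \<union> {(Inr a, Inr b) | b a. (b, a) \<in> qrels Q} \<rparr>"

text \<open>Specialization: g^* \<mapsto> g^{-1}, (g^*)^{-1} \<mapsto> g.\<close>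
definition specialize :: "'v \<times> (('a + 'a) \<times> bool) list \<Rightarrow> 'v \<times> ('a \<times> bool) list" where
  "specialize w = (fst w, map (\<lambda>(a, b). case a of Inl g \<Rightarrow> (g, b) | Inr g \<Rightarrow> (g, \<not> b)) (snd w))"

definition Mcat :: "('v,'a) bq \<Rightarrow> ('v, 'a + 'a, 'k::field) rep set" where
  "Mcat Q = {N. is_rep (preproj Q) N \<and>
     (\<exists>ws. (\<forall>w\<in>set ws. is_string (preproj Q) w \<and> is_string Q (specialize w)) \<and>
        isomorphic (preproj Q) N (foldr (dsum (preproj Q)) (map (strmod (preproj Q)) ws) zero_rep))}"

definition torshad :: "('v,'a) bq \<Rightarrow> ('v, 'a + 'a, 'k::field) rep set set" where
  "torshad Q = {T \<inter> Mcat Q | T. torsion_class (preproj Q) T}"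

text \<open>A label (w, D): D picks one split from each of the d breaks of w.  We encode
  D positionally as a subset of {..<d}: position i (0-based, letter gamma_{i+1})
  in D means the chosen split of the i-th break is the right factor
  (letters before position i); otherwise it is the left factor.\<close>
definition labels :: "('v,'a) bq \<Rightarrow> (('v \<times> ('a \<times> bool) list) \<times> nat set) set" where
  "labels Q = {(w, D). is_string Q w \<and> D \<subseteq> {..<length (snd w)}}"

definition str_map :: "'v \<times> ('a \<times> bool) list \<Rightarrow> nat set \<Rightarrow> 'v \<times> (('a + 'a) \<times> bool) list" where
  "str_map w D = (fst w, map (\<lambda>i. case snd w ! i of (g, e) \<Rightarrow>
        if i \<in> D then (if e then Inl g else Inr g, True)
                 else (if e then Inr g else Inl g, False)) [0..<length (snd w)])"

definition Bset :: "('v,'a) bq \<Rightarrow> ('v, 'a + 'a, 'k::field) rep set \<Rightarrow> ('v \<times> ('a \<times> bool) list) set" where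
  "Bset Q Tt = {w \<in> Str Q. \<exists>D. (w, D) \<in> labels Q \<and> strmod (preproj Q) (str_map w D) \<in> Tt}"

end

theory Submission
  imports Defs
begin

(*
  Cut a concatenation c = v gamma^(+-1) u at the letter joining u and v.  For a label D of c, the
  lifted letter of str(c_D) at the break is direct exactly when the break is in D.  Ordering the basis
  of M(str c_D) as that of the u-part followed by that of the v-part, every arrow acts
  block-triangularly, the single entry linking the blocks coming from the joining letter.  Hence
  a direct joining letter gives a short exact sequence 0 -> M(str v) -> M(str c) -> M(str u) -> 0,
  and an inverse one a surjection M(str c) -> M(str v), where u and v carry the restricted
  labels.  Extension-closure of a torsion class then shows that B is closed (choose D containing
  the break), and quotient-closure that its complement is closed.
*)

lemma sum_delta_mult_left:
  "(\<Sum>m<(n::nat). (if m = k then 1 else 0) * f m) = (if k < n then f k else (0::'k::semiring_1))"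
proof -
  have "(\<Sum>m<n. (if m = k then 1 else 0) * f m) = (\<Sum>m<n. if m = k then f m else 0)"
    by (rule sum.cong) auto
  also have "\<dots> = (if k < n then f k else 0)"
    by (subst sum.delta) auto
  finally show ?thesis .
qed

lemma sum_delta_mult_right:
  "(\<Sum>m<(n::nat). f m * (if m = k then 1 else 0)) = (if k < n then f k else (0::'k::semiring_1))"
  using sum_delta_mult_left[where n=n and k=k and f=f]
  by (simp add: if_distrib[of "\<lambda>y. _ * y"] if_distrib[of "\<lambda>y. y * _"] cong: if_cong)

text \<open>The inclusion of coordinates as the block starting at index d, and the projection onto
  that block: the maps between a string module and the modules of its two parts.\<close>

definition shift_emb :: "nat \<Rightarrow> 'k::field mat" where
  "shift_emb d = (\<lambda>i j. if i = j + d then 1 else 0)"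

definition shift_proj :: "nat \<Rightarrow> 'k::field mat" where
  "shift_proj d = (\<lambda>i j. if j = i + d then 1 else 0)"

lemma eq_add_iff_diff: "(i = m + d) \<longleftrightarrow> d \<le> i \<and> m = i - (d::nat)"
  by auto

lemma mmul_shift_emb_right:
  "mmul n A (shift_emb d) i j = (if j + d < n then A i (j + d) else 0)"
  unfolding mmul_def shift_emb_def by (simp add: eq_commute[of j] sum_delta_mult_right)

lemma mmul_shift_proj_left:
  "mmul n (shift_proj d) B i j = (if i + d < n then B (i + d) j else 0)"
  unfolding mmul_def shift_proj_def by (simp add: sum_delta_mult_left)

lemma mmul_shift_emb_left:
  "mmul n (shift_emb d) B i j = (if d \<le> i \<and> i - d < n then B (i - d) j else 0)"
  unfolding mmul_def shift_emb_def eq_add_iff_diff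
  by (cases "d \<le> i") (simp_all add: sum_delta_mult_left)

lemma mmul_shift_proj_right:
  "mmul n A (shift_proj d) i j = (if d \<le> j \<and> j - d < n then A i (j - d) else 0)"
  unfolding mmul_def shift_proj_def eq_add_iff_diff
  by (cases "d \<le> j") (simp_all add: sum_delta_mult_right)

lemma mapp_shift_emb:
  "mapp n (shift_emb d) x i = (if d \<le> i \<and> i - d < n then x (i - d) else 0)"
  unfolding mapp_def shift_emb_def eq_add_iff_diff
  by (cases "d \<le> i") (simp_all add: eq_commute[of i] sum_delta_mult_left)

lemma mapp_shift_proj:
  "mapp n (shift_proj d) x i = (if i + d < n then x (i + d) else 0)"
  unfolding mapp_def shift_proj_def by (simp add: sum_delta_mult_left)

lemma card_Suc_add_split:
  "card {j. j < Suc (p + k) \<and> R j} = card {j. j \<le> p \<and> R j} + card {i. i < k \<and> R (Suc (p + i))}"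
proof -
  have split: "{j. j < Suc (p + k) \<and> R j} =
      {j. j \<le> p \<and> R j} \<union> (\<lambda>i. Suc (p + i)) ` {i. i < k \<and> R (Suc (p + i))}"
    by (auto simp: image_iff) (metis add_Suc_right less_Suc_eq_le less_iff_Suc_add not_le add_less_cancel_left)
  show ?thesis unfolding split by (subst card_Un_disjoint) (auto simp: card_image inj_on_def)
qed

lemma ex_less_Suc_add_iff:
  "(\<exists>q<Suc (p + n). R q) \<longleftrightarrow> (\<exists>q<p. R q) \<or> R p \<or> (\<exists>k<n. R (Suc (p + k)))"
proof
  assume "\<exists>q<Suc (p + n). R q"
  then obtain q where q: "q < Suc (p + n)" "R q" by blast
  then have "q < p \<or> q = p \<or> (q - Suc p < n \<and> q = Suc (p + (q - Suc p)))" by linarith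
  then show "(\<exists>q<p. R q) \<or> R p \<or> (\<exists>k<n. R (Suc (p + k)))" using q(2) by metis
next
  assume "(\<exists>q<p. R q) \<or> R p \<or> (\<exists>k<n. R (Suc (p + k)))"
  then consider q where "q < p" "R q" | "R p" | k where "k < n" "R (Suc (p + k))" by blast
  then show "\<exists>q<Suc (p + n). R q"
  proof cases
    case (1 q)
    then show ?thesis by (intro exI[of _ q]) simp
  next
    case 2
    then show ?thesis by (intro exI[of _ p]) simp
  next
    case (3 k)
    then show ?thesis by (intro exI[of _ "Suc (p + k)"]) simp
  qed
qed

definition is_walk :: "('v,'b) bq \<Rightarrow> 'v \<times> ('b \<times> bool) list \<Rightarrow> bool" where
  "is_walk P w \<longleftrightarrow> (snd w \<noteq> [] \<longrightarrow> lsrc P (hd (snd w)) = fst w) \<and>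
     (\<forall>i. Suc i < length (snd w) \<longrightarrow> ltgt P (snd w ! i) = lsrc P (snd w ! Suc i))"

lemma is_string_imp_is_walk: "is_string P w \<Longrightarrow> is_walk P w"
  by (cases w) (auto simp: is_string_def is_walk_def)

lemma svert_Suc: "svert P w (Suc q) = ltgt P (snd w ! q)"
  by (simp add: svert_def)

lemma svert_eq_lsrc:
  "is_walk P w \<Longrightarrow> q < length (snd w) \<Longrightarrow> svert P w q = lsrc P (snd w ! q)"
  by (cases q) (auto simp: is_walk_def svert_def hd_conv_nth)

definition sdim :: "('v,'b) bq \<Rightarrow> 'v \<times> ('b \<times> bool) list \<Rightarrow> 'v \<Rightarrow> nat" where
  "sdim P w v = card {j. j \<le> length (snd w) \<and> svert P w j = v}"

definition letter_entry ::
  "('v,'b) bq \<Rightarrow> 'v \<times> ('b \<times> bool) list \<Rightarrow> 'b \<Rightarrow> nat \<Rightarrow> nat \<Rightarrow> nat \<Rightarrow> bool" where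
  "letter_entry P w a r c q \<longleftrightarrow>
     (snd w ! q = (a, True) \<and> c = sidx P w q \<and> r = sidx P w (Suc q)) \<or>
     (snd w ! q = (a, False) \<and> c = sidx P w (Suc q) \<and> r = sidx P w q)"

definition strmod_entry ::
  "('v,'b) bq \<Rightarrow> 'v \<times> ('b \<times> bool) list \<Rightarrow> 'b \<Rightarrow> nat \<Rightarrow> nat \<Rightarrow> bool" where
  "strmod_entry P w a r c \<longleftrightarrow> (\<exists>q<length (snd w). letter_entry P w a r c q)"

lemma strmod_eq: "strmod P w = (sdim P w, \<lambda>a r c. if strmod_entry P w a r c then 1 else 0)"
  unfolding strmod_def sdim_def strmod_entry_def letter_entry_def by (rule refl)

lemma sidx_less_sdim: "j \<le> length (snd w) \<Longrightarrow> sidx P w j < sdim P w (svert P w j)"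
  unfolding sidx_def sdim_def by (rule psubset_card_mono) auto

lemma sidx_inj:
  assumes "svert P w j = svert P w j'" and "sidx P w j = sidx P w j'"
  shows "j = j'"
proof (rule ccontr)
  have less: "sidx P w i < sidx P w i'" if "i < i'" "svert P w i = svert P w i'" for i i'
  proof -
    have "{k. k < i \<and> svert P w k = svert P w i} \<subset> {k. k < i' \<and> svert P w k = svert P w i'}"
      using that by auto
    then show ?thesis unfolding sidx_def by (rule psubset_card_mono[rotated]) simp
  qed
  assume "j \<noteq> j'"
  then show False using less[of j j'] less[of j' j] assms by (auto simp: nat_neq_iff)
qed

lemma letter_entry_bounds:
  assumes "is_walk P w" "q < length (snd w)" "letter_entry P w a r c q"
  shows "r < sdim P w (qtgt P a) \<and> c < sdim P w (qsrc P a)"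
proof -
  have "sidx P w q < sdim P w (lsrc P (snd w ! q))"
    using sidx_less_sdim[of q w P] svert_eq_lsrc[OF assms(1,2)] assms(2) by simp
  moreover have "sidx P w (Suc q) < sdim P w (ltgt P (snd w ! q))"
    using sidx_less_sdim[of "Suc q" w P] assms(2) by (simp add: svert_Suc)
  ultimately show ?thesis using assms(3) unfolding letter_entry_def by (auto simp: lsrc_def ltgt_def)
qed

lemma strmod_entry_bounds:
  "is_walk P w \<Longrightarrow> strmod_entry P w a r c \<Longrightarrow> r < sdim P w (qtgt P a) \<and> c < sdim P w (qsrc P a)"
  unfolding strmod_entry_def by (auto dest: letter_entry_bounds)

context
  fixes P :: "('v,'b) bq" and x :: 'v and L1 L2 :: "('b \<times> bool) list" and l :: "'b \<times> bool"
begin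

lemma svert_append_prefix: "j \<le> length L1 \<Longrightarrow> svert P (x, L1 @ l # L2) j = svert P (x, L1) j"
  by (cases j) (auto simp: svert_def nth_append)

lemma svert_append_suffix: "svert P (x, L1 @ l # L2) (Suc (length L1 + j)) = svert P (ltgt P l, L2) j"
  by (cases j) (auto simp: svert_def nth_append)

lemma sdim_append: "sdim P (x, L1 @ l # L2) v = sdim P (x, L1) v + sdim P (ltgt P l, L2) v"
proof -
  have "sdim P (x, L1 @ l # L2) v =
      card {j. j < Suc (length L1 + Suc (length L2)) \<and> svert P (x, L1 @ l # L2) j = v}"
    unfolding sdim_def by (simp add: less_Suc_eq_le)
  also have "\<dots> = card {j. j \<le> length L1 \<and> svert P (x, L1 @ l # L2) j = v} +
      card {i. i < Suc (length L2) \<and> svert P (x, L1 @ l # L2) (Suc (length L1 + i)) = v}"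
    by (rule card_Suc_add_split)
  also have "\<dots> = sdim P (x, L1) v + sdim P (ltgt P l, L2) v"
    unfolding sdim_def svert_append_suffix
    by (simp add: less_Suc_eq_le svert_append_prefix cong: conj_cong)
  finally show ?thesis .
qed

lemma sidx_append_prefix: "j \<le> length L1 \<Longrightarrow> sidx P (x, L1 @ l # L2) j = sidx P (x, L1) j"
  unfolding sidx_def by (rule arg_cong[where f=card]) (auto simp: svert_append_prefix)

lemma sidx_append_suffix:
  "sidx P (x, L1 @ l # L2) (Suc (length L1 + k)) =
     sdim P (x, L1) (svert P (ltgt P l, L2) k) + sidx P (ltgt P l, L2) k"
proof -
  let ?v = "svert P (ltgt P l, L2) k"
  have "sidx P (x, L1 @ l # L2) (Suc (length L1 + k)) =
      card {j. j < Suc (length L1 + k) \<and> svert P (x, L1 @ l # L2) j = ?v}"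
    unfolding sidx_def svert_append_suffix ..
  also have "\<dots> = card {j. j \<le> length L1 \<and> svert P (x, L1 @ l # L2) j = ?v} +
      card {i. i < k \<and> svert P (x, L1 @ l # L2) (Suc (length L1 + i)) = ?v}"
    by (rule card_Suc_add_split)
  also have "\<dots> = sdim P (x, L1) ?v + sidx P (ltgt P l, L2) k"
    unfolding sdim_def sidx_def svert_append_suffix
    by (simp add: svert_append_prefix cong: conj_cong)
  finally show ?thesis .
qed

lemma is_walk_append_prefix:
  assumes "is_walk P (x, L1 @ l # L2)"
  shows "is_walk P (x, L1)"
  unfolding is_walk_def
proof (intro conjI allI impI)
  show "lsrc P (hd (snd (x, L1))) = fst (x, L1)" if "snd (x, L1) \<noteq> []"
    using that assms by (auto simp: is_walk_def)
  show "ltgt P (snd (x, L1) ! i) = lsrc P (snd (x, L1) ! Suc i)" if "Suc i < length (snd (x, L1))" for i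
    using that assms[unfolded is_walk_def, THEN conjunct2, rule_format, of i] by (simp add: nth_append)
qed

lemma is_walk_append_suffix:
  assumes "is_walk P (x, L1 @ l # L2)"
  shows "is_walk P (ltgt P l, L2)"
  unfolding is_walk_def
proof (intro conjI allI impI)
  show "lsrc P (hd (snd (ltgt P l, L2))) = fst (ltgt P l, L2)" if "snd (ltgt P l, L2) \<noteq> []"
    using that assms[unfolded is_walk_def, THEN conjunct2, rule_format, of "length L1"]
    by (auto simp: nth_append hd_conv_nth)
  show "ltgt P (snd (ltgt P l, L2) ! i) = lsrc P (snd (ltgt P l, L2) ! Suc i)"
    if "Suc i < length (snd (ltgt P l, L2))" for i
    using that assms[unfolded is_walk_def, THEN conjunct2, rule_format, of "Suc (length L1 + i)"]
    by (simp add: nth_append)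
qed

lemma letter_entry_append_prefix:
  "q < length L1 \<Longrightarrow> letter_entry P (x, L1 @ l # L2) a r c q \<longleftrightarrow> letter_entry P (x, L1) a r c q"
  unfolding letter_entry_def by (simp add: nth_append sidx_append_prefix)

lemma letter_entry_append_middle:
  "letter_entry P (x, L1 @ l # L2) a r c (length L1) \<longleftrightarrow>
     (l = (a, True) \<and> c = sidx P (x, L1) (length L1) \<and> r = sdim P (x, L1) (ltgt P l)) \<or>
     (l = (a, False) \<and> c = sdim P (x, L1) (ltgt P l) \<and> r = sidx P (x, L1) (length L1))"
proof -
  have "sidx P (x, L1 @ l # L2) (Suc (length L1)) = sdim P (x, L1) (ltgt P l)"
    using sidx_append_suffix[of 0] by (simp add: sidx_def svert_def)
  then show ?thesis unfolding letter_entry_def by (simp add: sidx_append_prefix)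
qed

lemma letter_entry_append_suffix:
  assumes walk: "is_walk P (x, L1 @ l # L2)" and k: "k < length L2"
  shows "letter_entry P (x, L1 @ l # L2) a r c (Suc (length L1 + k)) \<longleftrightarrow>
    sdim P (x, L1) (qtgt P a) \<le> r \<and> sdim P (x, L1) (qsrc P a) \<le> c \<and>
    letter_entry P (ltgt P l, L2) a (r - sdim P (x, L1) (qtgt P a)) (c - sdim P (x, L1) (qsrc P a)) k"
proof -
  have "svert P (ltgt P l, L2) k = lsrc P (L2 ! k)"
    using svert_eq_lsrc[OF is_walk_append_suffix[OF walk]] k by simp
  moreover have "svert P (ltgt P l, L2) (Suc k) = ltgt P (L2 ! k)"
    by (simp add: svert_Suc)
  moreover have "sidx P (x, L1 @ l # L2) (Suc (Suc (length L1 + k))) =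
      sdim P (x, L1) (svert P (ltgt P l, L2) (Suc k)) + sidx P (ltgt P l, L2) (Suc k)"
    using sidx_append_suffix[of "Suc k"] by simp
  ultimately show ?thesis
    unfolding letter_entry_def sidx_append_suffix by (auto simp: nth_append lsrc_def ltgt_def)
qed

lemma strmod_entry_append:
  assumes walk: "is_walk P (x, L1 @ l # L2)"
  shows "strmod_entry P (x, L1 @ l # L2) a r c \<longleftrightarrow>
    strmod_entry P (x, L1) a r c \<or> letter_entry P (x, L1 @ l # L2) a r c (length L1) \<or>
    (sdim P (x, L1) (qtgt P a) \<le> r \<and> sdim P (x, L1) (qsrc P a) \<le> c \<and>
     strmod_entry P (ltgt P l, L2) a (r - sdim P (x, L1) (qtgt P a)) (c - sdim P (x, L1) (qsrc P a)))"
  using ex_less_Suc_add_iff[of "length L1" "length L2" "letter_entry P (x, L1 @ l # L2) a r c"]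
  unfolding strmod_entry_def
  by (auto simp: letter_entry_append_prefix letter_entry_append_suffix[OF walk])

lemma sidx_append_middle:
  assumes "is_walk P (x, L1 @ l # L2)"
  shows "sidx P (x, L1) (length L1) < sdim P (x, L1) (lsrc P l)"
proof -
  have "svert P (x, L1) (length L1) = lsrc P l"
    using svert_eq_lsrc[OF assms, of "length L1"] svert_append_prefix[of "length L1"] by simp
  then show ?thesis using sidx_less_sdim[of "length L1" "(x, L1)" P] by simp
qed

text \<open>With the basis of the string module of L1 l L2 ordered as that of L1 followed by that of L2,
  the entry of the middle letter l lies in the lower left block if l is direct and in the upper
  right block otherwise.\<close>

lemma strmod_entry_append_top:
  assumes walk: "is_walk P (x, L1 @ l # L2)" and direct: "snd l" and r: "r < sdim P (x, L1) (qtgt P a)"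
  shows "strmod_entry P (x, L1 @ l # L2) a r c \<longleftrightarrow>
    c < sdim P (x, L1) (qsrc P a) \<and> strmod_entry P (x, L1) a r c"
  using strmod_entry_bounds[OF is_walk_append_prefix[OF walk]] direct r
  unfolding strmod_entry_append[OF walk] letter_entry_append_middle
  by (auto simp: ltgt_def)

lemma strmod_entry_append_right:
  assumes walk: "is_walk P (x, L1 @ l # L2)" and direct: "snd l"
  shows "strmod_entry P (x, L1 @ l # L2) a r (c + sdim P (x, L1) (qsrc P a)) \<longleftrightarrow>
    sdim P (x, L1) (qtgt P a) \<le> r \<and> strmod_entry P (ltgt P l, L2) a (r - sdim P (x, L1) (qtgt P a)) c"
  using strmod_entry_bounds[OF is_walk_append_prefix[OF walk]] sidx_append_middle[OF walk] direct
  unfolding strmod_entry_append[OF walk] letter_entry_append_middle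
  by (auto simp: lsrc_def)

lemma strmod_entry_append_bottom:
  assumes walk: "is_walk P (x, L1 @ l # L2)" and inverse: "\<not> snd l"
  shows "strmod_entry P (x, L1 @ l # L2) a (r + sdim P (x, L1) (qtgt P a)) c \<longleftrightarrow>
    sdim P (x, L1) (qsrc P a) \<le> c \<and> strmod_entry P (ltgt P l, L2) a r (c - sdim P (x, L1) (qsrc P a))"
  using strmod_entry_bounds[OF is_walk_append_prefix[OF walk]] sidx_append_middle[OF walk] inverse
  unfolding strmod_entry_append[OF walk] letter_entry_append_middle
  by (auto simp: lsrc_def)

lemma surj_morph_strmod_append_prefix:
  assumes walk: "is_walk P (x, L1 @ l # L2)" and direct: "snd l"
  shows "surj_morph P (strmod P (x, L1 @ l # L2)) (strmod P (x, L1)) (\<lambda>v. shift_proj 0 :: 'k::field mat)"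
  unfolding surj_morph_def is_morph_def lin_surj_def strmod_eq
  by (auto simp: mmul_shift_proj_right mmul_shift_proj_left mapp_shift_proj sdim_append
      strmod_entry_append_top[OF walk direct])

lemma surj_morph_strmod_append_suffix:
  assumes walk: "is_walk P (x, L1 @ l # L2)" and inverse: "\<not> snd l"
  shows "surj_morph P (strmod P (x, L1 @ l # L2)) (strmod P (ltgt P l, L2))
    (\<lambda>v. shift_proj (sdim P (x, L1) v) :: 'k::field mat)"
proof -
  have "\<exists>z. \<forall>i<sdim P (ltgt P l, L2) v. mapp (sdim P (x, L1 @ l # L2) v) (shift_proj (sdim P (x, L1) v)) z i = y i"
    for v and y :: "'k vec"
    by (rule exI[of _ "\<lambda>j. y (j - sdim P (x, L1) v)"]) (simp add: mapp_shift_proj sdim_append)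
  moreover have "is_morph P (strmod P (x, L1 @ l # L2)) (strmod P (ltgt P l, L2))
    (\<lambda>v. shift_proj (sdim P (x, L1) v) :: 'k::field mat)"
    using strmod_entry_bounds[OF is_walk_append_suffix[OF walk]]
    unfolding is_morph_def strmod_eq
    by (auto simp: mmul_shift_proj_right mmul_shift_proj_left sdim_append
      strmod_entry_append_bottom[OF walk inverse])
  ultimately show ?thesis unfolding surj_morph_def lin_surj_def strmod_eq by simp
qed

lemma short_exact_strmod_append:
  assumes walk: "is_walk P (x, L1 @ l # L2)" and direct: "snd l"
  shows "short_exact P (strmod P (ltgt P l, L2)) (strmod P (x, L1 @ l # L2)) (strmod P (x, L1))
    (\<lambda>v. shift_emb (sdim P (x, L1) v)) (\<lambda>v. shift_proj 0 :: 'k::field mat)"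
proof -
  have "is_morph P (strmod P (ltgt P l, L2)) (strmod P (x, L1 @ l # L2))
    (\<lambda>v. shift_emb (sdim P (x, L1) v) :: 'k::field mat)"
    using strmod_entry_bounds[OF is_walk_append_suffix[OF walk]]
    unfolding is_morph_def strmod_eq
    by (auto simp: mmul_shift_emb_right mmul_shift_emb_left sdim_append
      strmod_entry_append_right[OF walk direct])
  moreover have "lin_inj (sdim P (ltgt P l, L2) v) (sdim P (x, L1 @ l # L2) v)
    (shift_emb (sdim P (x, L1) v) :: 'k mat)" for v
    unfolding lin_inj_def mapp_shift_emb sdim_append
    by (metis add.commute add_diff_cancel_left' le_add2 nat_add_left_cancel_less)
  moreover have "(\<forall>i<n1. mapp (n1 + n2) (shift_proj 0) y i = 0) \<longleftrightarrow>
      (\<exists>z. \<forall>i<n1 + n2. mapp n2 (shift_emb n1) z i = y i)" for n1 n2 and y :: "'k vec"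
  proof
    assume "\<forall>i<n1. mapp (n1 + n2) (shift_proj 0) y i = 0"
    then show "\<exists>z. \<forall>i<n1 + n2. mapp n2 (shift_emb n1) z i = y i"
      by (intro exI[of _ "\<lambda>k. y (k + n1)"]) (auto simp: mapp_shift_emb mapp_shift_proj)
  next
    assume "\<exists>z. \<forall>i<n1 + n2. mapp n2 (shift_emb n1) z i = y i"
    then obtain z where z: "\<forall>i<n1 + n2. mapp n2 (shift_emb n1) z i = y i" by blast
    show "\<forall>i<n1. mapp (n1 + n2) (shift_proj 0) y i = 0"
    proof (intro allI impI)
      fix i assume "i < n1"
      then show "mapp (n1 + n2) (shift_proj 0) y i = 0"
        using z[rule_format, of i] by (simp add: mapp_shift_emb mapp_shift_proj)
    qed
  qed
  ultimately show ?thesis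
    unfolding short_exact_def using surj_morph_strmod_append_prefix[OF walk direct]
    by (simp add: strmod_eq sdim_append)
qed

end

text \<open>Two entries that compose share a basis vector, i.e. a position of the walk; the letters
  meeting there are consecutive and would form the relation, which a string forbids.\<close>

lemma letter_entries_not_composable:
  assumes string: "is_string P (x, L)" and rel: "(b, a) \<in> qrels P" and ab: "qtgt P a = qsrc P b"
    and q: "q < length L" and q': "q' < length L"
    and entry_a: "letter_entry P (x, L) a k j q" and entry_b: "letter_entry P (x, L) b i k q'"
  shows False
proof -
  have walk: "is_walk P (x, L)" using is_string_imp_is_walk[OF string] .
  obtain t where t: "(t = Suc q \<and> L ! q = (a, True)) \<or> (t = q \<and> L ! q = (a, False))"
    "k = sidx P (x, L) t" "svert P (x, L) t = qtgt P a"
    using entry_a svert_eq_lsrc[OF walk] q unfolding letter_entry_def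
    by (auto simp: svert_Suc lsrc_def ltgt_def)
  obtain s where s: "(s = q' \<and> L ! q' = (b, True)) \<or> (s = Suc q' \<and> L ! q' = (b, False))"
    "k = sidx P (x, L) s" "svert P (x, L) s = qsrc P b"
    using entry_b svert_eq_lsrc[OF walk] q' unfolding letter_entry_def
    by (auto simp: svert_Suc lsrc_def ltgt_def)
  have "t = s" using sidx_inj t(2,3) s(2,3) ab by metis
  have no_rel: "(snd (L ! n) \<and> snd (L ! Suc n) \<longrightarrow> (fst (L ! Suc n), fst (L ! n)) \<notin> qrels P) \<and>
      (\<not> snd (L ! n) \<and> \<not> snd (L ! Suc n) \<longrightarrow> (fst (L ! n), fst (L ! Suc n)) \<notin> qrels P)"
    if "Suc n < length L" for n
    using string that unfolding is_string_def by auto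
  from t(1) s(1) \<open>t = s\<close> show False
  proof (elim disjE conjE)
    assume "t = Suc q" "L ! q = (a, True)" "s = q'" "L ! q' = (b, True)"
    then show False using no_rel[of q] q' rel \<open>t = s\<close> by simp
  next
    assume "t = q" "L ! q = (a, False)" "s = Suc q'" "L ! q' = (b, False)"
    then show False using no_rel[of q'] q rel \<open>t = s\<close> by simp
  qed simp_all
qed

lemma strmod_is_rep:
  assumes string: "is_string P w"
    and arrs_verts: "\<forall>a\<in>arrs P. qsrc P a \<in> verts P \<and> qtgt P a \<in> verts P"
    and rels_composable: "\<forall>(b, a)\<in>qrels P. qtgt P a = qsrc P b"
  shows "is_rep P (strmod P w :: ('v, 'b, 'k::field) rep)"
proof -
  obtain x L where w: "w = (x, L)" by (cases w)
  have walk: "is_walk P w" using is_string_imp_is_walk[OF string] .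
  have arrs: "fst (L ! q) \<in> arrs P" if "q < length L" for q
    using string that unfolding w is_string_def by auto
  have "svert P w j \<in> verts P" if "j \<le> length L" for j
    using string arrs[of "j - 1"] arrs_verts that unfolding w is_string_def
    by (cases j) (auto simp: svert_def ltgt_def)
  then have "sdim P w v = 0" if "v \<notin> verts P" for v
    unfolding sdim_def w using that by fastforce
  moreover have "\<not> strmod_entry P w a r c" if "a \<notin> arrs P" for a r c
    using arrs that unfolding strmod_entry_def letter_entry_def w by fastforce
  moreover have "\<not> (strmod_entry P w b r m \<and> strmod_entry P w a m c)"
    if "(b, a) \<in> qrels P" for a b r m c
    using letter_entries_not_composable[of P x L b a] string rels_composable that
    unfolding strmod_entry_def w by fastforce
  ultimately show ?thesis
    unfolding is_rep_def strmod_eq mmul_def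
    using strmod_entry_bounds[OF walk] by (fastforce intro!: sum.neutral)
qed

definition lift_letter :: "bool \<Rightarrow> 'a \<times> bool \<Rightarrow> ('a + 'a) \<times> bool" where
  "lift_letter b l = (case l of (g, e) \<Rightarrow>
     if b then (if e then Inl g else Inr g, True) else (if e then Inr g else Inl g, False))"

lemma str_map_eq_lift_letter:
  "str_map w D = (fst w, map (\<lambda>i. lift_letter (i \<in> D) (snd w ! i)) [0..<length (snd w)])"
  unfolding str_map_def lift_letter_def by (rule refl)

lemma snd_lift_letter [simp]: "snd (lift_letter b l) = b"
  by (cases l) (simp add: lift_letter_def)

lemma lsrc_lift_letter [simp]: "lsrc (preproj Q) (lift_letter b l) = lsrc Q l"
  by (cases l) (auto simp: lift_letter_def lsrc_def preproj_def)

lemma ltgt_lift_letter [simp]: "ltgt (preproj Q) (lift_letter b l) = ltgt Q l"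
  by (cases l) (auto simp: lift_letter_def ltgt_def preproj_def)

lemma specialize_lift_letter: "(case fst (lift_letter b l) of Inl g \<Rightarrow> (g, b) | Inr g \<Rightarrow> (g, \<not> b)) = l"
  by (cases l) (auto simp: lift_letter_def)

lemma str_map_fst [simp]: "fst (str_map w D) = fst w"
  by (simp add: str_map_def)

lemma specialize_str_map: "specialize (str_map w D) = w"
  unfolding specialize_def str_map_eq_lift_letter
  by (simp add: comp_def case_prod_beta specialize_lift_letter map_nth)

lemma lift_letter_in_arrs: "fst l \<in> arrs Q \<Longrightarrow> fst (lift_letter b l) \<in> arrs (preproj Q)"
  by (cases l) (auto simp: lift_letter_def preproj_def)

lemma lift_letter_pair:
  assumes "\<not> (fst l1 = fst l2 \<and> snd l1 \<noteq> snd l2)"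
    and "snd l1 \<and> snd l2 \<longrightarrow> (fst l2, fst l1) \<notin> qrels Q"
    and "\<not> snd l1 \<and> \<not> snd l2 \<longrightarrow> (fst l1, fst l2) \<notin> qrels Q"
  shows "\<not> (fst (lift_letter b1 l1) = fst (lift_letter b2 l2) \<and> b1 \<noteq> b2) \<and>
    (b1 \<and> b2 \<longrightarrow> (fst (lift_letter b2 l2), fst (lift_letter b1 l1)) \<notin> qrels (preproj Q)) \<and>
    (\<not> b1 \<and> \<not> b2 \<longrightarrow> (fst (lift_letter b1 l1), fst (lift_letter b2 l2)) \<notin> qrels (preproj Q))"
  using assms by (cases l1; cases l2) (auto simp: lift_letter_def preproj_def split: if_splits)

lemma is_string_str_map:
  assumes string: "is_string Q w"
  shows "is_string (preproj Q) (str_map w D)"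
proof -
  obtain x L where w: "w = (x, L)" by (cases w)
  define M where "M = map (\<lambda>i. lift_letter (i \<in> D) (L ! i)) [0..<length L]"
  have M_nth: "M ! i = lift_letter (i \<in> D) (L ! i)" if "i < length L" for i
    using that unfolding M_def by (simp del: upt_Suc)
  have "is_string (preproj Q) (x, M)"
    unfolding is_string_def prod.case
  proof (intro conjI allI impI ballI)
    show "x \<in> verts (preproj Q)" using string unfolding w is_string_def by (simp add: preproj_def)
    show "fst l \<in> arrs (preproj Q)" if "l \<in> set M" for l
      using that string unfolding w is_string_def M_def by (auto intro!: lift_letter_in_arrs)
    show "lsrc (preproj Q) (hd M) = x" if "M \<noteq> []"
      using that string unfolding w is_string_def M_def by (simp add: hd_map hd_conv_nth)
  next
    fix i assume "Suc i < length M"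
    then have i: "Suc i < length L" unfolding M_def by simp
    then show "ltgt (preproj Q) (M ! i) = lsrc (preproj Q) (M ! Suc i)"
      using string unfolding w is_string_def by (simp add: M_nth)
    have "\<not> (fst (L ! i) = fst (L ! Suc i) \<and> snd (L ! i) \<noteq> snd (L ! Suc i)) \<and>
        (snd (L ! i) \<and> snd (L ! Suc i) \<longrightarrow> (fst (L ! Suc i), fst (L ! i)) \<notin> qrels Q) \<and>
        (\<not> snd (L ! i) \<and> \<not> snd (L ! Suc i) \<longrightarrow> (fst (L ! i), fst (L ! Suc i)) \<notin> qrels Q)"
      using string i unfolding w is_string_def by blast
    then have "\<not> (fst (M ! i) = fst (M ! Suc i) \<and> snd (M ! i) \<noteq> snd (M ! Suc i)) \<and>
        (snd (M ! i) \<and> snd (M ! Suc i) \<longrightarrow> (fst (M ! Suc i), fst (M ! i)) \<notin> qrels (preproj Q)) \<and>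
        (\<not> snd (M ! i) \<and> \<not> snd (M ! Suc i) \<longrightarrow> (fst (M ! i), fst (M ! Suc i)) \<notin> qrels (preproj Q))"
      using lift_letter_pair[of "L ! i" "L ! Suc i" Q "i \<in> D" "Suc i \<in> D"] i by (simp add: M_nth)
    then show "\<not> (fst (M ! i) = fst (M ! Suc i) \<and> snd (M ! i) \<noteq> snd (M ! Suc i))"
      "snd (M ! i) \<and> snd (M ! Suc i) \<Longrightarrow> (fst (M ! Suc i), fst (M ! i)) \<notin> qrels (preproj Q)"
      "\<not> snd (M ! i) \<and> \<not> snd (M ! Suc i) \<Longrightarrow> (fst (M ! i), fst (M ! Suc i)) \<notin> qrels (preproj Q)"
      by blast+
  qed
  then show ?thesis unfolding w str_map_eq_lift_letter M_def by simp
qed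

lemma is_rep_strmod_str_map:
  assumes "gentle Q" "is_string Q w"
  shows "is_rep (preproj Q) (strmod (preproj Q) (str_map w D) :: ('v, 'a + 'a, 'k::field) rep)"
  using assms by (intro strmod_is_rep is_string_str_map) (auto simp: gentle_def preproj_def)

lemma isomorphic_dsum_zero_rep:
  assumes "is_rep P N"
  shows "isomorphic P N (dsum P N (zero_rep :: ('v, 'b, 'k::field) rep))"
proof -
  obtain d m where N: "N = (d, m)" by (cases N)
  have "m a i j = 0" if "a \<in> arrs P" "i \<ge> d (qtgt P a) \<or> j \<ge> d (qsrc P a)" for a i j
    using assms that unfolding N is_rep_def by auto
  then have "iso_morph P (d, m) (dsum P (d, m) zero_rep) (\<lambda>v. shift_proj 0)"
    unfolding iso_morph_def is_morph_def lin_surj_def lin_inj_def dsum_def zero_rep_def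
    by (auto simp: mmul_shift_proj_right mmul_shift_proj_left mapp_shift_proj)
  then show ?thesis unfolding isomorphic_def N by blast
qed

lemma strmod_str_map_in_Mcat:
  assumes "gentle Q" "is_string Q w"
  shows "(strmod (preproj Q) (str_map w D) :: ('v, 'a + 'a, 'k::field) rep) \<in> Mcat Q"
  using assms is_rep_strmod_str_map[OF assms]
    isomorphic_dsum_zero_rep[OF is_rep_strmod_str_map[OF assms]]
  unfolding Mcat_def
  by (intro CollectI conjI exI[of _ "[str_map w D]"]) (auto simp: is_string_str_map specialize_str_map)

lemma str_map_concat:
  "str_map (fst u, snd u @ l # snd v) D =
   (fst u, snd (str_map u {i \<in> D. i < length (snd u)}) @ lift_letter (length (snd u) \<in> D) l #
      snd (str_map v {k. Suc (length (snd u) + k) \<in> D}))"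
proof -
  let ?p = "length (snd u)"
  have "map (\<lambda>i. lift_letter (i \<in> D) ((snd u @ l # snd v) ! i)) [0..<length (snd u @ l # snd v)] =
     map (\<lambda>i. lift_letter (i \<in> {i \<in> D. i < ?p}) (snd u ! i)) [0..<?p] @ lift_letter (?p \<in> D) l #
     map (\<lambda>i. lift_letter (i \<in> {k. Suc (?p + k) \<in> D}) (snd v ! i)) [0..<length (snd v)]"
    (is "?lhs = ?rhs")
  proof (rule nth_equalityI)
    fix i assume "i < length ?lhs"
    then have "i < ?p \<or> i = ?p \<or> (i - Suc ?p < length (snd v) \<and> i = Suc (?p + (i - Suc ?p)))"
      by simp linarith
    then consider "i < ?p" | "i = ?p" | k where "i = Suc (?p + k)" "k < length (snd v)"
      by blast
    then show "?lhs ! i = ?rhs ! i"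
      by cases (simp_all add: nth_append del: upt_Suc)
  qed simp
  then show ?thesis unfolding str_map_eq_lift_letter by simp
qed

context
  fixes Q :: "('v, 'a) bq" and u v :: "'v \<times> ('a \<times> bool) list" and l :: "'a \<times> bool" and D :: "nat set"
  assumes string: "is_string Q (fst u, snd u @ l # snd v)" and joins: "ltgt Q l = fst v"
begin

lemma str_map_concat_cases:
  obtains L1 L2 where "str_map u {i \<in> D. i < length (snd u)} = (fst u, L1)"
    and "str_map v {k. Suc (length (snd u) + k) \<in> D} = (ltgt Q l, L2)"
    and "str_map (fst u, snd u @ l # snd v) D = (fst u, L1 @ lift_letter (length (snd u) \<in> D) l # L2)"
    and "is_walk (preproj Q) (fst u, L1 @ lift_letter (length (snd u) \<in> D) l # L2)"
proof -
  have "is_walk (preproj Q) (str_map (fst u, snd u @ l # snd v) D)"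
    using is_string_imp_is_walk[OF is_string_str_map[OF string]] .
  then show ?thesis
    using that[of "snd (str_map u {i \<in> D. i < length (snd u)})"
        "snd (str_map v {k. Suc (length (snd u) + k) \<in> D})"] joins
    by (simp add: prod_eq_iff str_map_concat)
qed

lemma short_exact_str_map_concat:
  assumes "length (snd u) \<in> D"
  shows "\<exists>f g. short_exact (preproj Q)
    (strmod (preproj Q) (str_map v {k. Suc (length (snd u) + k) \<in> D}))
    (strmod (preproj Q) (str_map (fst u, snd u @ l # snd v) D))
    (strmod (preproj Q) (str_map u {i \<in> D. i < length (snd u)}) :: ('v, 'a + 'a, 'k::field) rep) f g"
proof -
  obtain L1 L2 where parts: "str_map u {i \<in> D. i < length (snd u)} = (fst u, L1)"
    "str_map v {k. Suc (length (snd u) + k) \<in> D} = (ltgt Q l, L2)"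
    "str_map (fst u, snd u @ l # snd v) D = (fst u, L1 @ lift_letter True l # L2)"
    and walk: "is_walk (preproj Q) (fst u, L1 @ lift_letter True l # L2)"
    by (rule str_map_concat_cases) (use assms in auto)
  show ?thesis using short_exact_strmod_append[OF walk] unfolding parts by auto
qed

lemma surj_morph_str_map_concat:
  assumes "length (snd u) \<notin> D"
  shows "\<exists>f. surj_morph (preproj Q)
    (strmod (preproj Q) (str_map (fst u, snd u @ l # snd v) D))
    (strmod (preproj Q) (str_map v {k. Suc (length (snd u) + k) \<in> D}) :: ('v, 'a + 'a, 'k::field) rep) f"
proof -
  obtain L1 L2 where parts:
    "str_map v {k. Suc (length (snd u) + k) \<in> D} = (ltgt Q l, L2)"
    "str_map (fst u, snd u @ l # snd v) D = (fst u, L1 @ lift_letter False l # L2)"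
    and walk: "is_walk (preproj Q) (fst u, L1 @ lift_letter False l # L2)"
    by (rule str_map_concat_cases) (use assms in auto)
  show ?thesis using surj_morph_strmod_append_suffix[OF walk] unfolding parts by auto
qed

end

lemma mem_Bset_iff:
  fixes T :: "('v, 'a + 'a, 'k::field) rep set"
  assumes "gentle Q"
  shows "w \<in> Bset Q (T \<inter> Mcat Q) \<longleftrightarrow>
    is_string Q w \<and> (\<exists>D \<subseteq> {..<length (snd w)}. strmod (preproj Q) (str_map w D) \<in> T)"
proof -
  have "(strmod (preproj Q) (str_map w D) :: ('v, 'a + 'a, 'k) rep) \<in> Mcat Q" if "is_string Q w" for D
    using strmod_str_map_in_Mcat[OF assms that] .
  then show ?thesis unfolding Bset_def labels_def Str_def by auto
qed

lemma concatenation_cases: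
  assumes "c \<in> concatenations Q u v"
  obtains l where "c = (fst u, snd u @ l # snd v)" "ltgt Q l = fst v" "is_string Q c"
  using assms unfolding concatenations_def Str_def by auto

lemma torsion_class_quotient:
  "torsion_class P T \<Longrightarrow> M \<in> T \<Longrightarrow> surj_morph P M N f \<Longrightarrow> is_rep P N \<Longrightarrow> N \<in> T"
  unfolding torsion_class_def by blast

lemma torsion_class_extension:
  "torsion_class P T \<Longrightarrow> L \<in> T \<Longrightarrow> N \<in> T \<Longrightarrow> short_exact P L M N f g \<Longrightarrow> is_rep P M \<Longrightarrow> M \<in> T"
  unfolding torsion_class_def by blast

lemma short_exact_imp_surj_morph: "short_exact P L M N f g \<Longrightarrow> surj_morph P M N g"
  by (simp add: short_exact_def)

lemma closed_set_Bset:
  fixes T :: "('v, 'a + 'a, 'k::field) rep set"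
  assumes gentle: "gentle Q" and torsion: "torsion_class (preproj Q) T"
  shows "closed_set Q (Bset Q (T \<inter> Mcat Q))"
  unfolding closed_set_def
proof (intro ballI subsetI)
  fix u v c
  assume "u \<in> Bset Q (T \<inter> Mcat Q)" "v \<in> Bset Q (T \<inter> Mcat Q)" and c: "c \<in> concatenations Q u v"
  then obtain Du Dv where Du: "Du \<subseteq> {..<length (snd u)}" "strmod (preproj Q) (str_map u Du) \<in> T"
    and Dv: "Dv \<subseteq> {..<length (snd v)}" "strmod (preproj Q) (str_map v Dv) \<in> T"
    unfolding mem_Bset_iff[OF gentle] by blast
  obtain l where c_eq: "c = (fst u, snd u @ l # snd v)" and joins: "ltgt Q l = fst v"
    and string: "is_string Q c"
    using c by (rule concatenation_cases)
  let ?p = "length (snd u)"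
  define D where "D = Du \<union> {?p} \<union> (\<lambda>k. Suc (?p + k)) ` Dv"
  have parts: "{i \<in> D. i < ?p} = Du" "{k. Suc (?p + k) \<in> D} = Dv"
    using Du(1) unfolding D_def by auto
  have "?p \<in> D" unfolding D_def by blast
  from short_exact_str_map_concat[OF string[unfolded c_eq] joins this]
  obtain f g where "short_exact (preproj Q) (strmod (preproj Q) (str_map v Dv))
      (strmod (preproj Q) (str_map c D)) (strmod (preproj Q) (str_map u Du) :: ('v, 'a + 'a, 'k) rep) f g"
    unfolding parts c_eq by blast
  then have "strmod (preproj Q) (str_map c D) \<in> T"
    using torsion_class_extension[OF torsion Dv(2) Du(2)] is_rep_strmod_str_map[OF gentle string] by blast
  moreover have "D \<subseteq> {..<length (snd c)}" using Du(1) Dv(1) unfolding D_def c_eq by auto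
  ultimately show "c \<in> Bset Q (T \<inter> Mcat Q)" using string unfolding mem_Bset_iff[OF gentle] by blast
qed

lemma Bset_concatenation_cases:
  fixes T :: "('v, 'a + 'a, 'k::field) rep set"
  assumes gentle: "gentle Q" and torsion: "torsion_class (preproj Q) T"
    and c: "c \<in> concatenations Q u v" and u: "is_string Q u" and v: "is_string Q v"
    and "c \<in> Bset Q (T \<inter> Mcat Q)"
  shows "u \<in> Bset Q (T \<inter> Mcat Q) \<or> v \<in> Bset Q (T \<inter> Mcat Q)"
proof -
  obtain l where c_eq: "c = (fst u, snd u @ l # snd v)" and joins: "ltgt Q l = fst v"
    and string: "is_string Q c"
    using c by (rule concatenation_cases)
  obtain D where D: "D \<subseteq> {..<length (snd c)}" "strmod (preproj Q) (str_map c D) \<in> T"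
    using \<open>c \<in> Bset Q (T \<inter> Mcat Q)\<close> unfolding mem_Bset_iff[OF gentle] by blast
  let ?p = "length (snd u)"
  show ?thesis
  proof (cases "?p \<in> D")
    case True
    from short_exact_str_map_concat[OF string[unfolded c_eq] joins True]
    obtain f g where "short_exact (preproj Q) (strmod (preproj Q) (str_map v {k. Suc (?p + k) \<in> D}))
        (strmod (preproj Q) (str_map c D))
        (strmod (preproj Q) (str_map u {i \<in> D. i < ?p}) :: ('v, 'a + 'a, 'k) rep) f g"
      unfolding c_eq by blast
    then have "strmod (preproj Q) (str_map u {i \<in> D. i < ?p}) \<in> T"
      using torsion_class_quotient[OF torsion D(2) short_exact_imp_surj_morph]
        is_rep_strmod_str_map[OF gentle u] by blast
    moreover have "{i \<in> D. i < ?p} \<subseteq> {..<length (snd u)}" by auto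
    ultimately show ?thesis using u unfolding mem_Bset_iff[OF gentle] by blast
  next
    case False
    from surj_morph_str_map_concat[OF string[unfolded c_eq] joins False]
    obtain f where "surj_morph (preproj Q) (strmod (preproj Q) (str_map c D))
        (strmod (preproj Q) (str_map v {k. Suc (?p + k) \<in> D}) :: ('v, 'a + 'a, 'k) rep) f"
      unfolding c_eq by blast
    then have "strmod (preproj Q) (str_map v {k. Suc (?p + k) \<in> D}) \<in> T"
      using torsion_class_quotient[OF torsion D(2)] is_rep_strmod_str_map[OF gentle v] by blast
    moreover have "{k. Suc (?p + k) \<in> D} \<subseteq> {..<length (snd v)}" using D(1) unfolding c_eq by auto
    ultimately show ?thesis using v unfolding mem_Bset_iff[OF gentle] by blast
  qed
qed

lemma closed_set_Str_diff_Bset: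
  fixes T :: "('v, 'a + 'a, 'k::field) rep set"
  assumes gentle: "gentle Q" and torsion: "torsion_class (preproj Q) T"
  shows "closed_set Q (Str Q - Bset Q (T \<inter> Mcat Q))"
  unfolding closed_set_def
proof (intro ballI subsetI)
  fix u v c
  assume u: "u \<in> Str Q - Bset Q (T \<inter> Mcat Q)" and v: "v \<in> Str Q - Bset Q (T \<inter> Mcat Q)"
    and c: "c \<in> concatenations Q u v"
  then have "c \<notin> Bset Q (T \<inter> Mcat Q)"
    using Bset_concatenation_cases[OF gentle torsion c] unfolding Str_def by blast
  moreover have "c \<in> Str Q" using c by (rule concatenation_cases) (simp add: Str_def)
  ultimately show "c \<in> Str Q - Bset Q (T \<inter> Mcat Q)" by blast
qed

theorem lemma6p8:
  fixes Q :: "('v, 'a) bq" and Tt :: "('v, 'a + 'a, 'k::field) rep set"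
  assumes "brick_gentle Q TYPE('k)"
    and "Tt \<in> torshad Q"
  shows "biclosed Q (Bset Q Tt)"
proof -
  have gentle: "gentle Q" using assms(1) by (simp add: brick_gentle_def)
  obtain T where "torsion_class (preproj Q) T" and Tt: "Tt = T \<inter> Mcat Q"
    using assms(2) unfolding torshad_def by blast
  moreover have "Bset Q Tt \<subseteq> Str Q" unfolding Bset_def by blast
  ultimately show ?thesis
    unfolding biclosed_def Tt using closed_set_Bset[OF gentle] closed_set_Str_diff_Bset[OF gentle] by blast
qed

end
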